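(* Let $k,n$ be positive integers. A graph $G$ with $n$ vertices satisfies $\kappa'(G)=\tau(G)=k$ if and only if $G$ has an edge-cut of size $k$ and a spanning subgraph belonging to $\mathcal{F}_{k,n}$.
   Context: Graphs are finite, loopless, possibly with multiple edges. $\kappa'(G)$ is the edge connectivity; $\tau(G)$ is the maximum number of edge-disjoint spanning trees of a connected graph $G$. An edge-cut is a minimal set of edges whose removal increases the number of components. For $n>1$, $\mathcal{F}_{k,n}$ is the set of graphs $G$ on $n$ vertices with $\kappa'(G)=\tau(G)=k$ whose number of edges is minimum among all graphs on $n$ vertices with $\kappa'=\tau=k$. *)

theory Defs
  imports Main
begin

text \<open>A finite loopless multigraph is given by a vertex set V, an edge set E of
edge identifiers, and an endpoint map assigning each edge its 2-element set of ends.\<close>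

definition multigraph :: "'v set \<Rightarrow> 'e set \<Rightarrow> ('e \<Rightarrow> 'v set) \<Rightarrow> bool" where
  "multigraph V E ends \<longleftrightarrow> finite V \<and> finite E \<and>
     (\<forall>e\<in>E. ends e \<subseteq> V \<and> card (ends e) = 2)"

definition adj :: "'e set \<Rightarrow> ('e \<Rightarrow> 'v set) \<Rightarrow> 'v \<Rightarrow> 'v \<Rightarrow> bool" where
  "adj E ends x y \<longleftrightarrow> (\<exists>e\<in>E. ends e = {x, y})"

definition reach :: "'e set \<Rightarrow> ('e \<Rightarrow> 'v set) \<Rightarrow> 'v \<Rightarrow> 'v \<Rightarrow> bool" where
  "reach E ends = (adj E ends)\<^sup>*\<^sup>*"

definition connected_graph :: "'v set \<Rightarrow> 'e set \<Rightarrow> ('e \<Rightarrow> 'v set) \<Rightarrow> bool" where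
  "connected_graph V E ends \<longleftrightarrow> V \<noteq> {} \<and> (\<forall>u\<in>V. \<forall>v\<in>V. reach E ends u v)"

definition num_components :: "'v set \<Rightarrow> 'e set \<Rightarrow> ('e \<Rightarrow> 'v set) \<Rightarrow> nat" where
  "num_components V E ends = card ((\<lambda>v. {u\<in>V. reach E ends u v}) ` V)"

text \<open>Edge connectivity: least number of edges whose removal disconnects G
  (0 for graphs with at most one vertex and for disconnected graphs).\<close>
definition edge_connectivity :: "'v set \<Rightarrow> 'e set \<Rightarrow> ('e \<Rightarrow> 'v set) \<Rightarrow> nat" where
  "edge_connectivity V E ends =
     (if card V \<le> 1 then 0
      else (LEAST m. \<exists>S\<subseteq>E. card S = m \<and> \<not> connected_graph V (E - S) ends))"

text \<open>A spanning tree of (V,E): an edge set T \<subseteq> E such that (V,T) is connected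
  and acyclic, acyclicity expressed as: removing any edge of T disconnects (V,T)
  (i.e. a minimally connected spanning subgraph).\<close>
definition spanning_tree :: "'v set \<Rightarrow> 'e set \<Rightarrow> ('e \<Rightarrow> 'v set) \<Rightarrow> 'e set \<Rightarrow> bool" where
  "spanning_tree V E ends T \<longleftrightarrow> T \<subseteq> E \<and> connected_graph V T ends \<and>
     (\<forall>e\<in>T. \<not> connected_graph V (T - {e}) ends)"

definition tree_packing :: "'v set \<Rightarrow> 'e set \<Rightarrow> ('e \<Rightarrow> 'v set) \<Rightarrow> nat" where
  "tree_packing V E ends =
     (if card V \<le> 1 then 0
      else (GREATEST m. \<exists>f :: nat \<Rightarrow> 'e set.
              (\<forall>i<m. spanning_tree V E ends (f i)) \<and>
              (\<forall>i<m. \<forall>j<m. i \<noteq> j \<longrightarrow> f i \<inter> f j = {})))"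

definition edge_cut :: "'v set \<Rightarrow> 'e set \<Rightarrow> ('e \<Rightarrow> 'v set) \<Rightarrow> 'e set \<Rightarrow> bool" where
  "edge_cut V E ends S \<longleftrightarrow> S \<subseteq> E \<and>
     num_components V (E - S) ends > num_components V E ends \<and>
     (\<forall>S'. S' \<subset> S \<longrightarrow> \<not> num_components V (E - S') ends > num_components V E ends)"

text \<open>Since everything is isomorphism invariant, it suffices to range over graphs
  with vertices and edge identifiers taken from nat.\<close>
definition min_edges_F :: "nat \<Rightarrow> nat \<Rightarrow> nat" where
  "min_edges_F k n = (LEAST m. \<exists>(V::nat set) (E::nat set) ends.
      multigraph V E ends \<and> card V = n \<and> card E = m \<and>
      edge_connectivity V E ends = k \<and> tree_packing V E ends = k)"

definition in_F :: "nat \<Rightarrow> nat \<Rightarrow> 'v set \<Rightarrow> 'e set \<Rightarrow> ('e \<Rightarrow> 'v set) \<Rightarrow> bool" where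
  "in_F k n V E ends \<longleftrightarrow> multigraph V E ends \<and> card V = n \<and>
     edge_connectivity V E ends = k \<and> tree_packing V E ends = k \<and>
     card E = min_edges_F k n"

end

theory Submission
  imports Defs
begin

text \<open>Each of k edge-disjoint spanning trees has n - 1 edges and meets every disconnecting
  edge set, so \<tau> \<le> \<kappa>' and a graph with \<tau> = k has at least k(n - 1) edges; k parallel
  copies of a path attain this bound, so the members of F_{k,n} are exactly the graphs with
  \<kappa>' = \<tau> = k and k(n - 1) edges. If \<kappa>'(G) = \<tau>(G) = k, the union of k disjoint spanning
  trees is such a member, and a minimum disconnecting set is an edge-cut of size k.
  Conversely, a spanning subgraph in F_{k,n} gives \<kappa>', \<tau> \<ge> k by monotonicity, while an
  edge-cut of size k gives \<tau> \<le> \<kappa>' \<le> k.\<close>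

lemma adj_sym: "adj F ends x y \<Longrightarrow> adj F ends y x"
  by (auto simp: adj_def insert_commute)

lemma reach_refl [simp]: "reach F ends x x"
  by (simp add: reach_def)

lemma reach_trans: "reach F ends x y \<Longrightarrow> reach F ends y z \<Longrightarrow> reach F ends x z"
  unfolding reach_def by (rule rtranclp_trans)

lemma adj_imp_reach: "adj F ends x y \<Longrightarrow> reach F ends x y"
  unfolding reach_def by simp

lemma reach_sym: "reach F ends x y \<Longrightarrow> reach F ends y x"
  unfolding reach_def
proof (induction rule: rtranclp.induct)
  case (rtrancl_into_rtrancl a b c)
  then show ?case by (meson adj_sym converse_rtranclp_into_rtranclp)
qed simp

lemma reach_mono: "reach F ends x y \<Longrightarrow> F \<subseteq> F' \<Longrightarrow> reach F' ends x y"
  unfolding reach_def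
proof (induction rule: rtranclp.induct)
  case (rtrancl_into_rtrancl a b c)
  then have "adj F' ends b c" by (auto simp: adj_def)
  with rtrancl_into_rtrancl show ?case by (meson rtranclp.rtrancl_into_rtrancl)
qed simp

lemma reach_empty_iff: "reach {} ends u v \<longleftrightarrow> u = v"
proof -
  have "adj {} ends = (\<lambda>x y. False)" by (intro ext) (simp add: adj_def)
  then show ?thesis by (auto simp: reach_def elim: converse_rtranclpE)
qed

lemma reach_insert_iff:
  assumes e: "ends e = {a, b}"
  shows "reach (insert e F) ends u v \<longleftrightarrow>
    reach F ends u v \<or> (reach F ends u a \<and> reach F ends b v) \<or> (reach F ends u b \<and> reach F ends a v)"
    (is "?L \<longleftrightarrow> ?R u v")
proof
  assume ?L
  then show "?R u v" unfolding reach_def[of "insert e F"]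
  proof (induction rule: rtranclp.induct)
    case (rtrancl_into_rtrancl x y z)
    from rtrancl_into_rtrancl(2) obtain e' where e': "e' \<in> insert e F" "ends e' = {y, z}"
      by (auto simp: adj_def)
    show ?case
    proof (cases "e' = e")
      case True
      then have "(y = a \<and> z = b) \<or> (y = b \<and> z = a)"
        using e e' by (auto simp: doubleton_eq_iff)
      with rtrancl_into_rtrancl(3) show ?thesis by auto
    next
      case False
      with e' have "reach F ends y z" by (intro adj_imp_reach) (auto simp: adj_def)
      with rtrancl_into_rtrancl(3) show ?thesis by (meson reach_trans)
    qed
  qed simp
next
  have "reach (insert e F) ends a b" "reach (insert e F) ends b a"
    using e by (auto simp: adj_def intro!: adj_imp_reach)
  moreover assume "?R u v"
  ultimately show ?L by (meson reach_mono reach_trans subset_insertI)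
qed

lemma reach_insert_eq:
  assumes "ends e = {a, b}" and "reach F ends a b"
  shows "reach (insert e F) ends = reach F ends"
  using assms reach_sym[OF assms(2)] by (intro ext) (meson reach_insert_iff reach_trans)

lemma connected_graph_mono:
  "connected_graph V F ends \<Longrightarrow> F \<subseteq> F' \<Longrightarrow> connected_graph V F' ends"
  unfolding connected_graph_def using reach_mono by metis

lemma not_connected_graph_empty:
  assumes "card V \<ge> 2" shows "\<not> connected_graph V {} ends"
proof
  assume conn: "connected_graph V {} ends"
  from assms have "finite V" "\<not> card V \<le> Suc 0"
    by (auto intro: card_ge_0_finite)
  then obtain u v where "u \<in> V" "v \<in> V" "u \<noteq> v"
    using card_le_Suc0_iff_eq by blast
  with conn show False by (auto simp: connected_graph_def reach_empty_iff)
qed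

definition component :: "'v set \<Rightarrow> 'e set \<Rightarrow> ('e \<Rightarrow> 'v set) \<Rightarrow> 'v \<Rightarrow> 'v set" where
  "component V F ends v = {u\<in>V. reach F ends u v}"

lemma num_components_eq_card_components:
  "num_components V F ends = card (component V F ends ` V)"
  by (simp add: num_components_def component_def)

lemma component_eq_iff:
  assumes "x \<in> V" "y \<in> V"
  shows "component V F ends x = component V F ends y \<longleftrightarrow> reach F ends x y"
  using assms unfolding component_def by (auto dest: reach_sym intro: reach_trans)

lemma component_insert:
  assumes e: "ends e = {a, b}"
  shows "component V (insert e F) ends v =
    (if reach F ends v a \<or> reach F ends v b
     then component V F ends a \<union> component V F ends b else component V F ends v)"
  unfolding component_def reach_insert_iff[where ends=ends and e=e and F=F, OF e]
  by (auto dest: reach_sym intro: reach_trans)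

lemma num_components_insert_reach:
  assumes "ends e = {a, b}" and "reach F ends a b"
  shows "num_components V (insert e F) ends = num_components V F ends"
  unfolding num_components_def reach_insert_eq[OF assms] ..

lemma components_insert:
  assumes V: "a \<in> V" "b \<in> V" and e: "ends e = {a, b}"
  shows "component V (insert e F) ends ` V =
    insert (component V F ends a \<union> component V F ends b)
      (component V F ends ` V - {component V F ends a, component V F ends b})"
    (is "?D ` V = insert (?C a \<union> ?C b) ?R")
proof -
  have D: "?D v = (if reach F ends v a \<or> reach F ends v b then ?C a \<union> ?C b else ?C v)" for v
    by (rule component_insert[where ends=ends and e=e and a=a and b=b, OF e])
  show ?thesis
  proof (intro equalityI subsetI)
    fix X assume "X \<in> ?D ` V"
    then obtain v where v: "v \<in> V" "X = ?D v" by blast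
    show "X \<in> insert (?C a \<union> ?C b) ?R"
    proof (cases "reach F ends v a \<or> reach F ends v b")
      case False
      then have "?C v \<noteq> ?C a" "?C v \<noteq> ?C b"
        using component_eq_iff[OF v(1) V(1)] component_eq_iff[OF v(1) V(2)] by auto
      with v False D[of v] show ?thesis by auto
    qed (use v D[of v] in auto)
  next
    fix X assume "X \<in> insert (?C a \<union> ?C b) ?R"
    then consider "X = ?C a \<union> ?C b" | v where "v \<in> V" "X = ?C v" "?C v \<noteq> ?C a" "?C v \<noteq> ?C b"
      by blast
    then show "X \<in> ?D ` V"
    proof cases
      case 1
      with V D[of a] show ?thesis by (intro rev_image_eqI[of a]) auto
    next
      case (2 v)
      then have "\<not> reach F ends v a" "\<not> reach F ends v b"
        using component_eq_iff[OF 2(1) V(1)] component_eq_iff[OF 2(1) V(2)] by blast+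
      with 2 D[of v] show ?thesis by (intro rev_image_eqI[of v]) auto
    qed
  qed
qed

lemma num_components_insert_bridge:
  assumes "finite V" and V: "a \<in> V" "b \<in> V" and e: "ends e = {a, b}"
    and not_reach: "\<not> reach F ends a b"
  shows "num_components V (insert e F) ends + 1 = num_components V F ends"
proof -
  let ?C = "component V F ends"
  define R where "R = ?C ` V - {?C a, ?C b}"
  have "finite R" using \<open>finite V\<close> by (simp add: R_def)
  have sub: "{?C a, ?C b} \<subseteq> ?C ` V" using V by auto
  have "card {?C a, ?C b} = 2" using component_eq_iff[OF V, of F ends] not_reach by simp
  with sub have "num_components V F ends = card R + 2"
    using \<open>finite V\<close> card_mono[OF _ sub] card_Diff_subset[OF _ sub]
    by (simp add: num_components_eq_card_components R_def)
  moreover have "?C a \<union> ?C b \<notin> R"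
  proof
    assume "?C a \<union> ?C b \<in> R"
    then obtain v where v: "v \<in> V" "?C a \<union> ?C b = ?C v" "?C v \<noteq> ?C a"
      unfolding R_def by blast
    have "a \<in> ?C v" unfolding v(2)[symmetric] using V by (simp add: component_def)
    then have "reach F ends a v" by (simp add: component_def)
    with v show False using component_eq_iff[OF V(1) v(1)] by blast
  qed
  then have "num_components V (insert e F) ends = card R + 1"
    using \<open>finite R\<close> components_insert[where ends=ends and e=e and F=F, OF V e]
    by (simp add: num_components_eq_card_components R_def)
  ultimately show ?thesis by simp
qed

lemma num_components_empty: "num_components V {} ends = card V"
proof -
  have "component V {} ends ` V = (\<lambda>v. {v}) ` V"
    by (auto simp: component_def reach_empty_iff)
  then show ?thesis by (simp add: num_components_eq_card_components card_image)
qed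

lemma num_components_pos: "finite V \<Longrightarrow> V \<noteq> {} \<Longrightarrow> 0 < num_components V F ends"
  by (simp add: num_components_def card_gt_0_iff)

lemma connected_graph_iff_num_components:
  assumes "finite V" "V \<noteq> {}"
  shows "connected_graph V F ends \<longleftrightarrow> num_components V F ends = 1"
proof
  assume "connected_graph V F ends"
  then have "component V F ends ` V = {V}"
    using assms(2) by (auto simp: component_def connected_graph_def)
  then show "num_components V F ends = 1" by (simp add: num_components_eq_card_components)
next
  assume "num_components V F ends = 1"
  then obtain X where X: "component V F ends ` V = {X}"
    by (auto simp: num_components_eq_card_components card_Suc_eq)
  have "reach F ends u v" if "u \<in> V" "v \<in> V" for u v
    using X that component_eq_iff[OF that, of F ends] by blast
  with assms show "connected_graph V F ends" by (simp add: connected_graph_def)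
qed

lemma num_components_insert_le:
  assumes "finite V" "ends e \<subseteq> V" "card (ends e) = 2"
  shows "num_components V F ends \<le> num_components V (insert e F) ends + 1"
proof -
  obtain a b where ab: "ends e = {a, b}" using assms(3) by (auto simp: card_2_iff)
  show ?thesis
  proof (cases "reach F ends a b")
    case True
    then show ?thesis using num_components_insert_reach[OF ab True] by simp
  next
    case False
    with assms ab show ?thesis using num_components_insert_bridge[OF assms(1) _ _ ab False] by simp
  qed
qed

lemma card_le_num_components_add_card:
  assumes "multigraph V F ends"
  shows "card V \<le> num_components V F ends + card F"
proof -
  have "finite V" "finite F" "\<forall>e\<in>F. ends e \<subseteq> V \<and> card (ends e) = 2"
    using assms by (auto simp: multigraph_def)
  from this(2,3) show ?thesis
  proof (induction F rule: finite_induct)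
    case empty
    then show ?case by (simp add: num_components_empty)
  next
    case (insert e F)
    then show ?case using num_components_insert_le[OF \<open>finite V\<close>, of ends e F] by simp
  qed
qed

lemma connected_graph_card_le:
  assumes "multigraph V F ends" "connected_graph V F ends"
  shows "card V \<le> card F + 1"
  using assms card_le_num_components_add_card[OF assms(1)]
    connected_graph_iff_num_components[of V F ends]
  by (simp add: multigraph_def connected_graph_def)

lemma multigraph_subset: "multigraph V E ends \<Longrightarrow> E' \<subseteq> E \<Longrightarrow> multigraph V E' ends"
  unfolding multigraph_def by (blast intro: finite_subset)

text \<open>Every edge of a spanning tree is a bridge of it, so deleting edges from a tree
  raises the number of components by one per edge.\<close>

lemma num_components_spanning_tree_diff:
  assumes G: "multigraph V E ends" and T: "spanning_tree V E ends T" and "S \<subseteq> T"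
  shows "num_components V (T - S) ends = card S + 1"
proof -
  have TE: "T \<subseteq> E" and conn: "connected_graph V T ends"
    and bridge: "\<forall>e\<in>T. \<not> connected_graph V (T - {e}) ends"
    using T by (auto simp: spanning_tree_def)
  have "finite V" "finite T" using G finite_subset[OF TE] by (auto simp: multigraph_def)
  have "V \<noteq> {}" using conn by (simp add: connected_graph_def)
  from finite_subset[OF \<open>S \<subseteq> T\<close> \<open>finite T\<close>] \<open>S \<subseteq> T\<close> show ?thesis
  proof (induction S rule: finite_subset_induct')
    case empty
    then show ?case
      using conn connected_graph_iff_num_components[OF \<open>finite V\<close> \<open>V \<noteq> {}\<close>, of T ends]
      by simp
  next
    case (insert e S)
    have "ends e \<subseteq> V" "card (ends e) = 2"
      using G TE \<open>e \<in> T\<close> by (auto simp: multigraph_def)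
    then obtain a b where ab: "ends e = {a, b}" and V: "a \<in> V" "b \<in> V"
      by (auto simp: card_2_iff)
    have not_reach: "\<not> reach (T - insert e S) ends a b"
    proof
      assume "reach (T - insert e S) ends a b"
      then have "reach (T - {e}) ends a b" by (rule reach_mono) auto
      then have "reach T ends = reach (T - {e}) ends"
        using reach_insert_eq[where ends=ends and e=e and a=a and b=b, OF ab] insert_Diff[OF \<open>e \<in> T\<close>] by metis
      then show False using conn bridge \<open>e \<in> T\<close> by (auto simp: connected_graph_def)
    qed
    have "insert e (T - insert e S) = T - S" using insert by auto
    then show ?case
      using num_components_insert_bridge[OF \<open>finite V\<close> V ab not_reach] insert by simp
  qed
qed

lemma card_spanning_tree:
  assumes "multigraph V E ends" "spanning_tree V E ends T"
  shows "card T + 1 = card V"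
  using num_components_spanning_tree_diff[OF assms order_refl] by (simp add: num_components_empty)

lemma spanning_treeI_card:
  assumes G: "multigraph V E ends" and "T \<subseteq> E" "connected_graph V T ends" "card T + 1 = card V"
  shows "spanning_tree V E ends T"
  unfolding spanning_tree_def
proof (intro conjI ballI notI)
  fix e assume "e \<in> T" "connected_graph V (T - {e}) ends"
  moreover have "multigraph V (T - {e}) ends" using multigraph_subset[OF G] assms(2) by blast
  moreover have "finite T" using G finite_subset[OF assms(2)] by (auto simp: multigraph_def)
  ultimately show False using connected_graph_card_le assms(4) card_Diff1_less[of T e] by fastforce
qed (use assms in auto)

lemma edge_connectivity_le:
  assumes "card V \<ge> 2" "S \<subseteq> E" "\<not> connected_graph V (E - S) ends"
  shows "edge_connectivity V E ends \<le> card S"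
  using assms unfolding edge_connectivity_def by (auto intro!: Least_le)

lemma edge_connectivity_witness:
  assumes "card V \<ge> 2"
  obtains S where "S \<subseteq> E" "card S = edge_connectivity V E ends" "\<not> connected_graph V (E - S) ends"
proof -
  let ?P = "\<lambda>m. \<exists>S\<subseteq>E. card S = m \<and> \<not> connected_graph V (E - S) ends"
  have "?P (card E)" using not_connected_graph_empty[OF assms] by (intro exI[of _ E]) auto
  then have "?P (Least ?P)" by (rule LeastI)
  with assms that show thesis by (auto simp: edge_connectivity_def)
qed

lemma card_ge_2_if_edge_connectivity_pos: "0 < edge_connectivity V E ends \<Longrightarrow> card V \<ge> 2"
  by (cases "card V \<le> 1") (auto simp: edge_connectivity_def)

lemma connected_graph_if_edge_connectivity_pos:
  assumes "0 < edge_connectivity V E ends" shows "connected_graph V E ends"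
proof (rule ccontr)
  assume "\<not> connected_graph V E ends"
  then have "edge_connectivity V E ends \<le> card {}"
    using edge_connectivity_le[OF card_ge_2_if_edge_connectivity_pos[OF assms], of "{}" E] by simp
  with assms show False by simp
qed

lemma edge_connectivity_mono:
  assumes "card V \<ge> 2" "finite E" "E' \<subseteq> E"
  shows "edge_connectivity V E' ends \<le> edge_connectivity V E ends"
proof -
  obtain S where S: "S \<subseteq> E" "card S = edge_connectivity V E ends" "\<not> connected_graph V (E - S) ends"
    using edge_connectivity_witness[OF assms(1), of E ends] .
  have "E' - S \<inter> E' \<subseteq> E - S" using assms(3) by blast
  then have "\<not> connected_graph V (E' - S \<inter> E') ends"
    using S(3) connected_graph_mono by blast
  then have "edge_connectivity V E' ends \<le> card (S \<inter> E')"
    by (intro edge_connectivity_le[OF assms(1)]) auto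
  also have "\<dots> \<le> card S" using finite_subset[OF S(1) assms(2)] by (intro card_mono) auto
  finally show ?thesis using S(2) by simp
qed

lemma edge_cut_not_connected:
  assumes "finite V" "V \<noteq> {}" "edge_cut V E ends S"
  shows "\<not> connected_graph V (E - S) ends"
proof -
  have "num_components V (E - S) ends \<noteq> 1"
    using assms(3) num_components_pos[OF assms(1,2), of E ends] unfolding edge_cut_def by linarith
  then show ?thesis using connected_graph_iff_num_components[OF assms(1,2), of "E - S" ends] by simp
qed

text \<open>In a connected graph every disconnecting set of minimum size is inclusion-minimal,
  hence an edge-cut.\<close>

lemma exists_edge_cut_card_edge_connectivity:
  assumes "finite E" and k: "0 < edge_connectivity V E ends"
  shows "\<exists>S. edge_cut V E ends S \<and> card S = edge_connectivity V E ends"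
proof -
  have V2: "card V \<ge> 2" by (rule card_ge_2_if_edge_connectivity_pos[OF k])
  then have "finite V" "V \<noteq> {}" by (auto intro: card_ge_0_finite)
  note nc_iff = connected_graph_iff_num_components[OF this, of _ ends]
  have conn: "num_components V E ends = 1"
    using connected_graph_if_edge_connectivity_pos[OF k] nc_iff[of E] by simp
  obtain S where S: "S \<subseteq> E" "card S = edge_connectivity V E ends" "\<not> connected_graph V (E - S) ends"
    using edge_connectivity_witness[OF V2] by blast
  have "connected_graph V (E - S') ends" if "S' \<subset> S" for S'
  proof (rule ccontr)
    assume "\<not> connected_graph V (E - S') ends"
    then have "card S \<le> card S'" using edge_connectivity_le[OF V2, of S'] S that by auto
    moreover have "card S' < card S"
      using that S(1) \<open>finite E\<close> by (meson finite_subset psubset_card_mono)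
    ultimately show False by simp
  qed
  moreover have "num_components V E ends < num_components V (E - S) ends"
    using S(3) conn nc_iff[of "E - S"] num_components_pos[OF \<open>finite V\<close> \<open>V \<noteq> {}\<close>, of "E - S" ends]
    by simp
  ultimately have "edge_cut V E ends S"
    using S(1) conn nc_iff unfolding edge_cut_def by (metis less_irrefl)
  with S(2) show ?thesis by blast
qed

definition tree_packable :: "'v set \<Rightarrow> 'e set \<Rightarrow> ('e \<Rightarrow> 'v set) \<Rightarrow> nat \<Rightarrow> bool" where
  "tree_packable V E ends m \<longleftrightarrow> (\<exists>f :: nat \<Rightarrow> 'e set.
     (\<forall>i<m. spanning_tree V E ends (f i)) \<and> (\<forall>i<m. \<forall>j<m. i \<noteq> j \<longrightarrow> f i \<inter> f j = {}))"

lemma tree_packing_eq_Greatest: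
  "card V \<ge> 2 \<Longrightarrow> tree_packing V E ends = (GREATEST m. tree_packable V E ends m)"
  unfolding tree_packing_def tree_packable_def by simp

lemma spanning_tree_mono:
  "spanning_tree V E' ends T \<Longrightarrow> E' \<subseteq> E \<Longrightarrow> spanning_tree V E ends T"
  by (auto simp: spanning_tree_def)

lemma tree_packable_mono:
  assumes "tree_packable V E' ends m" "E' \<subseteq> E" shows "tree_packable V E ends m"
proof -
  from assms(1) obtain f where "\<forall>i<m. spanning_tree V E' ends (f i)"
    and "\<forall>i<m. \<forall>j<m. i \<noteq> j \<longrightarrow> f i \<inter> f j = {}"
    unfolding tree_packable_def by blast
  with assms(2) show ?thesis unfolding tree_packable_def by (blast intro: spanning_tree_mono)
qed

text \<open>Each of the trees meets every disconnecting set, in pairwise distinct edges.\<close>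

lemma tree_packable_le_card_disconnecting:
  assumes "finite E" "tree_packable V E ends m" "S \<subseteq> E" "\<not> connected_graph V (E - S) ends"
  shows "m \<le> card S"
proof -
  obtain f where trees: "\<forall>i<m. spanning_tree V E ends (f i)"
    and disj: "\<forall>i<m. \<forall>j<m. i \<noteq> j \<longrightarrow> f i \<inter> f j = {}"
    using assms(2) by (auto simp: tree_packable_def)
  have "f i \<inter> S \<noteq> {}" if "i < m" for i
  proof
    assume "f i \<inter> S = {}"
    with trees that have "connected_graph V (f i) ends" "f i \<subseteq> E - S"
      by (auto simp: spanning_tree_def)
    with assms(4) show False by (auto dest: connected_graph_mono)
  qed
  then have "\<forall>i. \<exists>x. i < m \<longrightarrow> x \<in> f i \<inter> S" by blast
  then obtain g where g: "\<And>i. i < m \<Longrightarrow> g i \<in> f i \<inter> S" by metis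
  have "inj_on g {..<m}"
  proof (rule inj_onI, rule ccontr)
    fix i j assume "i \<in> {..<m}" "j \<in> {..<m}" "g i = g j" "i \<noteq> j"
    then show False using g[of i] g[of j] disj by auto
  qed
  moreover have "g ` {..<m} \<subseteq> S" using g by auto
  ultimately have "card {..<m} \<le> card S"
    using finite_subset[OF assms(3,1)] by (intro card_inj_on_le)
  then show ?thesis by simp
qed

lemma tree_packable_zero: "tree_packable V E ends 0"
  by (simp add: tree_packable_def)

lemma
  assumes "finite E" "card V \<ge> 2"
  shows tree_packable_tree_packing: "tree_packable V E ends (tree_packing V E ends)"
    and le_tree_packing: "tree_packable V E ends m \<Longrightarrow> m \<le> tree_packing V E ends"
proof -
  have bound: "m \<le> card E" if "tree_packable V E ends m" for m
    using tree_packable_le_card_disconnecting[OF assms(1) that order_refl]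
      not_connected_graph_empty[OF assms(2), of ends] by simp
  show "tree_packable V E ends (tree_packing V E ends)"
    unfolding tree_packing_eq_Greatest[OF assms(2)] using tree_packable_zero bound by (rule GreatestI_nat)
  show "m \<le> tree_packing V E ends" if "tree_packable V E ends m"
    unfolding tree_packing_eq_Greatest[OF assms(2)] using that bound by (rule Greatest_le_nat)
qed

lemma tree_packing_le_edge_connectivity:
  assumes "finite E" "card V \<ge> 2"
  shows "tree_packing V E ends \<le> edge_connectivity V E ends"
proof -
  obtain S where S: "S \<subseteq> E" "card S = edge_connectivity V E ends" "\<not> connected_graph V (E - S) ends"
    using edge_connectivity_witness[OF assms(2), of E ends] .
  show ?thesis
    using tree_packable_le_card_disconnecting[OF assms(1) tree_packable_tree_packing[OF assms] S(1,3)] S(2)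
    by simp
qed

lemma tree_packing_mono:
  assumes "finite E" "card V \<ge> 2" "E' \<subseteq> E"
  shows "tree_packing V E' ends \<le> tree_packing V E ends"
proof -
  have "finite E'" using assms(1,3) by (rule finite_subset[rotated])
  with assms show ?thesis
    by (intro le_tree_packing tree_packable_mono[OF tree_packable_tree_packing]) auto
qed

lemma card_ge_2_if_tree_packing_pos: "0 < tree_packing V E ends \<Longrightarrow> card V \<ge> 2"
  by (cases "card V \<le> 1") (auto simp: tree_packing_def)

lemma
  assumes G: "multigraph V E ends"
    and trees: "\<forall>i<k. spanning_tree V E ends (f i)"
    and disj: "\<forall>i<k. \<forall>j<k. i \<noteq> j \<longrightarrow> f i \<inter> f j = {}"
  shows card_Union_disjoint_spanning_trees: "card (\<Union>i<k. f i) = k * (card V - 1)"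
    and tree_packable_Union_spanning_trees: "tree_packable V (\<Union>i<k. f i) ends k"
proof -
  have "finite E" using G by (simp add: multigraph_def)
  have "f i \<subseteq> E" if "i < k" for i using trees that by (auto simp: spanning_tree_def)
  then have "finite (f i)" if "i < k" for i using finite_subset \<open>finite E\<close> that by blast
  then have "card (\<Union>i<k. f i) = (\<Sum>i<k. card (f i))"
    using disj by (intro card_UN_disjoint) auto
  also have "\<dots> = (\<Sum>i<k. card V - 1)"
  proof (rule sum.cong)
    fix i assume "i \<in> {..<k}"
    then have "card (f i) + 1 = card V" using card_spanning_tree[OF G] trees by simp
    then show "card (f i) = card V - 1" by simp
  qed simp
  finally show "card (\<Union>i<k. f i) = k * (card V - 1)" by simp
  show "tree_packable V (\<Union>i<k. f i) ends k"
    unfolding tree_packable_def using trees disj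
    by (intro exI[of _ f]) (auto simp: spanning_tree_def)
qed

lemma tree_packing_mult_le_card:
  assumes G: "multigraph V E ends"
  shows "tree_packing V E ends * (card V - 1) \<le> card E"
proof (cases "card V \<ge> 2")
  case True
  have "finite E" using G by (simp add: multigraph_def)
  then obtain f where trees: "\<forall>i<tree_packing V E ends. spanning_tree V E ends (f i)"
    and disj: "\<forall>i<tree_packing V E ends. \<forall>j<tree_packing V E ends. i \<noteq> j \<longrightarrow> f i \<inter> f j = {}"
    using tree_packable_tree_packing[OF \<open>finite E\<close> True, of ends] by (auto simp: tree_packable_def)
  have "(\<Union>i<tree_packing V E ends. f i) \<subseteq> E" using trees by (auto simp: spanning_tree_def)
  from card_mono[OF \<open>finite E\<close> this] show ?thesis
    using card_Union_disjoint_spanning_trees[OF G trees disj] by simp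
next
  case False
  then show ?thesis by (simp add: tree_packing_def)
qed

text \<open>Vertices 0, ..., p and edges 0, ..., kp - 1, edge e being copy e div p of the path edge
  between e mod p and e mod p + 1: k parallel copies of a path.\<close>

definition parallel_path_ends :: "nat \<Rightarrow> nat \<Rightarrow> nat set" where
  "parallel_path_ends p e = {e mod p, Suc (e mod p)}"

lemma multigraph_parallel_paths:
  assumes "0 < p" shows "multigraph {..p} {..<k * p} (parallel_path_ends p)"
  using assms by (auto simp: multigraph_def parallel_path_ends_def Suc_le_eq)

lemma reach_along_path:
  assumes "\<And>j. j < m \<Longrightarrow> adj F ends j (Suc j)"
  shows "j \<le> m \<Longrightarrow> reach F ends 0 j"
proof (induction j)
  case (Suc j)
  then have "reach F ends 0 j" "adj F ends j (Suc j)" using assms by simp_all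
  then show ?case by (blast intro: reach_trans adj_imp_reach)
qed simp

lemma spanning_tree_parallel_path:
  assumes "0 < p" "i < k"
  shows "spanning_tree {..p} {..<k * p} (parallel_path_ends p) {i * p..<i * p + p}"
proof (rule spanning_treeI_card[OF multigraph_parallel_paths[OF assms(1)]])
  have "i * p + p \<le> k * p" using assms(2) by (metis add.commute mult_Suc mult_le_mono1 Suc_leI)
  then show "{i * p..<i * p + p} \<subseteq> {..<k * p}" by auto
  have "adj {i * p..<i * p + p} (parallel_path_ends p) j (Suc j)" if "j < p" for j
    unfolding adj_def using that
    by (intro bexI[of _ "i * p + j"]) (auto simp: parallel_path_ends_def)
  then have "reach {i * p..<i * p + p} (parallel_path_ends p) 0 j" if "j \<le> p" for j
    using reach_along_path that by blast
  then show "connected_graph {..p} {i * p..<i * p + p} (parallel_path_ends p)"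
    unfolding connected_graph_def by (auto intro: reach_trans reach_sym)
qed simp

lemma not_connected_parallel_paths_diff_star:
  assumes "0 < p"
  shows "\<not> connected_graph {..p} ({..<k * p} - (\<lambda>i. i * p) ` {..<k}) (parallel_path_ends p)"
proof
  let ?F = "{..<k * p} - (\<lambda>i. i * p) ` {..<k}"
  have no_adj: "\<not> adj ?F (parallel_path_ends p) 0 y" for y
  proof
    assume "adj ?F (parallel_path_ends p) 0 y"
    then obtain e where e: "e < k * p" "e \<notin> (\<lambda>i. i * p) ` {..<k}" "0 \<in> parallel_path_ends p e"
      by (auto simp: adj_def)
    then have "e = e div p * p" "e div p < k"
      by (auto simp: parallel_path_ends_def less_mult_imp_div_less)
    with e(2) show False by blast
  qed
  assume "connected_graph {..p} ?F (parallel_path_ends p)"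
  then have "reach ?F (parallel_path_ends p) 0 1" using assms by (simp add: connected_graph_def)
  then show False unfolding reach_def by (rule converse_rtranclpE) (use no_adj in auto)
qed

lemma parallel_paths_edge_connectivity_tree_packing:
  assumes "0 < p"
  shows "edge_connectivity {..p} {..<k * p} (parallel_path_ends p) = k"
    and "tree_packing {..p} {..<k * p} (parallel_path_ends p) = k"
proof -
  let ?V = "{..p}" and ?E = "{..<k * p}" and ?ends = "parallel_path_ends p"
  have V2: "card ?V \<ge> 2" using assms by simp
  have "{i * p..<i * p + p} \<inter> {j * p..<j * p + p} = {}" if ij: "i \<noteq> j" for i j
  proof -
    consider "Suc i \<le> j" | "Suc j \<le> i" using ij by linarith
    then have "i * p + p \<le> j * p \<or> j * p + p \<le> i * p"
      by cases (auto dest: mult_le_mono1[of _ _ p])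
    then show ?thesis by auto
  qed
  then have "tree_packable ?V ?E ?ends k"
    unfolding tree_packable_def using spanning_tree_parallel_path[OF assms]
    by (intro exI[of _ "\<lambda>i. {i * p..<i * p + p}"]) simp
  then have "k \<le> tree_packing ?V ?E ?ends" by (rule le_tree_packing[OF finite_lessThan V2])
  moreover have "edge_connectivity ?V ?E ?ends \<le> card ((\<lambda>i. i * p) ` {..<k})"
    using assms by (intro edge_connectivity_le[OF V2] not_connected_parallel_paths_diff_star) auto
  then have "edge_connectivity ?V ?E ?ends \<le> k"
    using assms by (simp add: card_image inj_on_def)
  moreover have "tree_packing ?V ?E ?ends \<le> edge_connectivity ?V ?E ?ends"
    by (rule tree_packing_le_edge_connectivity[OF finite_lessThan V2])
  ultimately show "edge_connectivity ?V ?E ?ends = k" "tree_packing ?V ?E ?ends = k" by simp_all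
qed

lemma min_edges_F_eq:
  assumes "n \<ge> 2" shows "min_edges_F k n = k * (n - 1)"
  unfolding min_edges_F_def
proof (rule Least_equality)
  have "0 < n - 1" "card {..n - 1} = n" using assms by auto
  then show "\<exists>(V::nat set) (E::nat set) ends. multigraph V E ends \<and> card V = n \<and>
      card E = k * (n - 1) \<and> edge_connectivity V E ends = k \<and> tree_packing V E ends = k"
    by (intro exI[of _ "{..n - 1}"] exI[of _ "{..<k * (n - 1)}"] exI[of _ "parallel_path_ends (n - 1)"])
      (simp add: multigraph_parallel_paths parallel_paths_edge_connectivity_tree_packing)
next
  fix m assume "\<exists>(V::nat set) (E::nat set) ends. multigraph V E ends \<and> card V = n \<and>
      card E = m \<and> edge_connectivity V E ends = k \<and> tree_packing V E ends = k"
  then obtain V :: "nat set" and E :: "nat set" and ends where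
    "multigraph V E ends" "card V = n" "card E = m" "tree_packing V E ends = k"
    by blast
  then show "k * (n - 1) \<le> m" using tree_packing_mult_le_card[of V E ends] by simp
qed

lemma exists_in_F_subgraph:
  assumes G: "multigraph V E ends" and "0 < k"
    and kappa: "edge_connectivity V E ends = k" and tau: "tree_packing V E ends = k"
  shows "\<exists>H\<subseteq>E. in_F k (card V) V H ends"
proof -
  have V2: "card V \<ge> 2" using card_ge_2_if_edge_connectivity_pos \<open>0 < k\<close> kappa by blast
  have "finite E" using G by (simp add: multigraph_def)
  then obtain f where trees: "\<forall>i<k. spanning_tree V E ends (f i)"
    and disj: "\<forall>i<k. \<forall>j<k. i \<noteq> j \<longrightarrow> f i \<inter> f j = {}"
    using tree_packable_tree_packing[OF _ V2, of E ends] tau by (auto simp: tree_packable_def)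
  define H where "H = (\<Union>i<k. f i)"
  have "H \<subseteq> E" using trees by (auto simp: H_def spanning_tree_def)
  then have GH: "multigraph V H ends" using G by (rule multigraph_subset[rotated])
  then have "finite H" by (simp add: multigraph_def)
  have "k \<le> tree_packing V H ends"
    using le_tree_packing[OF \<open>finite H\<close> V2] tree_packable_Union_spanning_trees[OF G trees disj]
    by (simp add: H_def)
  moreover have "edge_connectivity V H ends \<le> k"
    using edge_connectivity_mono[OF V2 \<open>finite E\<close> \<open>H \<subseteq> E\<close>, of ends] kappa by simp
  moreover have "tree_packing V H ends \<le> edge_connectivity V H ends"
    using tree_packing_le_edge_connectivity[OF \<open>finite H\<close> V2] .
  ultimately have "edge_connectivity V H ends = k" "tree_packing V H ends = k" by simp_all
  moreover have "card H = min_edges_F k (card V)"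
    using card_Union_disjoint_spanning_trees[OF G trees disj] min_edges_F_eq[OF V2] by (simp add: H_def)
  ultimately show ?thesis using \<open>H \<subseteq> E\<close> GH by (auto simp: in_F_def)
qed

lemma edge_connectivity_tree_packing_if_edge_cut_subgraph:
  assumes G: "multigraph V E ends" and "0 < k"
    and S: "edge_cut V E ends S" "card S = k" and "E' \<subseteq> E"
    and E': "edge_connectivity V E' ends = k" "tree_packing V E' ends = k"
  shows "edge_connectivity V E ends = k \<and> tree_packing V E ends = k"
proof -
  have V2: "card V \<ge> 2" using card_ge_2_if_edge_connectivity_pos[of V E' ends] E'(1) \<open>0 < k\<close> by simp
  then have "finite V" "V \<noteq> {}" by (auto intro: card_ge_0_finite)
  have "finite E" using G by (simp add: multigraph_def)
  have "edge_connectivity V E ends \<le> k"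
    using edge_connectivity_le[OF V2 _ edge_cut_not_connected[OF \<open>finite V\<close> \<open>V \<noteq> {}\<close> S(1)]] S
    by (simp add: edge_cut_def)
  moreover have "k \<le> edge_connectivity V E ends"
    using edge_connectivity_mono[OF V2 \<open>finite E\<close> \<open>E' \<subseteq> E\<close>, of ends] E'(1) by simp
  moreover have "k \<le> tree_packing V E ends"
    using tree_packing_mono[OF \<open>finite E\<close> V2 \<open>E' \<subseteq> E\<close>, of ends] E'(2) by simp
  ultimately show ?thesis
    using tree_packing_le_edge_connectivity[OF \<open>finite E\<close> V2, of ends] by simp
qed

theorem theorem4p4:
  fixes V :: "'v set" and E :: "'e set" and ends :: "'e \<Rightarrow> 'v set" and k n :: nat
  assumes "k \<ge> 1" and "n \<ge> 1"
    and "multigraph V E ends" and "card V = n"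
  shows "(edge_connectivity V E ends = k \<and> tree_packing V E ends = k) \<longleftrightarrow>
         ((\<exists>S. edge_cut V E ends S \<and> card S = k) \<and>
          (\<exists>E'. E' \<subseteq> E \<and> in_F k n V E' ends))"
proof
  assume "edge_connectivity V E ends = k \<and> tree_packing V E ends = k"
  moreover have "finite E" using assms(3) by (simp add: multigraph_def)
  ultimately show "(\<exists>S. edge_cut V E ends S \<and> card S = k) \<and> (\<exists>E'. E' \<subseteq> E \<and> in_F k n V E' ends)"
    using exists_edge_cut_card_edge_connectivity[of E V ends]
      exists_in_F_subgraph[OF assms(3)] assms(1,4) by auto
next
  assume "(\<exists>S. edge_cut V E ends S \<and> card S = k) \<and> (\<exists>E'. E' \<subseteq> E \<and> in_F k n V E' ends)"
  then obtain S E' where "edge_cut V E ends S" "card S = k" "E' \<subseteq> E"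
    and "edge_connectivity V E' ends = k" "tree_packing V E' ends = k"
    by (auto simp: in_F_def)
  with assms(1,3) show "edge_connectivity V E ends = k \<and> tree_packing V E ends = k"
    by (intro edge_connectivity_tree_packing_if_edge_cut_subgraph[of V E ends k S E']) auto
qed

end
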